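(* Let $R$ be an associative ring with unity, $\sigma$ an endomorphism of $R$ and $\delta$ a $\sigma$-derivation of $R$. Let $a,b,c\in R$ and let $e\in\mathcal{S}_\ell(R)$ be such that $b\in r_R(cR)=eR$ and $Re$ is $(\sigma,\delta)$-stable. Then: (i) $c\,\sigma(ab)=c\,\delta(ab)=0$; (ii) $c\,f_k^j(ab)=0$ for all integers $0\le k\le j$.
   Context: A $\sigma$-derivation is an additive map $\delta\colon R\to R$ with $\delta(ab)=\sigma(a)\delta(b)+\delta(a)b$ for all $a,b\in R$. For $X\subseteq R$, $r_R(X)=\{a\in R\mid Xa=0\}$. An idempotent $e$ is left semicentral if $ere=re$ for all $r\in R$; $\mathcal{S}_\ell(R)$ denotes the set of left semicentral idempotents of $R$. A subset $X\subseteq R$ is $(\sigma,\delta)$-stable if $\sigma(X)\subseteq X$ and $\delta(X)\subseteq X$. For integers $0\le i\le j$, $f_i^j\in\mathrm{End}(R,+)$ denotes the sum of all possible words (compositions) in $\sigma,\delta$ built with $i$ letters $\sigma$ and $j-i$ letters $\delta$ (so $f_j^j=\sigma^j$, $f_0^j=\delta^j$); in the Ore extension $R[x;\sigma,\delta]$ one has $x^nr=\sum_{i=0}^n f_i^n(r)x^i$. *)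

theory Defs
  imports Main
begin

definition ring_endo :: "('a::ring_1 \<Rightarrow> 'a) \<Rightarrow> bool" where
  "ring_endo \<sigma> \<longleftrightarrow> (\<forall>x y. \<sigma> (x + y) = \<sigma> x + \<sigma> y) \<and> (\<forall>x y. \<sigma> (x * y) = \<sigma> x * \<sigma> y)"

definition sigma_derivation :: "('a::ring_1 \<Rightarrow> 'a) \<Rightarrow> ('a \<Rightarrow> 'a) \<Rightarrow> bool" where
  "sigma_derivation \<sigma> \<delta> \<longleftrightarrow> (\<forall>x y. \<delta> (x + y) = \<delta> x + \<delta> y) \<and>
      (\<forall>a b. \<delta> (a * b) = \<sigma> a * \<delta> b + \<delta> a * b)"

definition right_annihilator :: "'a::ring_1 set \<Rightarrow> 'a set" ("r\<^sub>R") where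
  "r\<^sub>R X = {a. \<forall>x\<in>X. x * a = 0}"

definition left_semicentral :: "'a::ring_1 set" ("\<S>\<^sub>\<ell>") where
  "\<S>\<^sub>\<ell> = {e. e * e = e \<and> (\<forall>r. e * r * e = r * e)}"

definition stable :: "('a \<Rightarrow> 'a) \<Rightarrow> ('a \<Rightarrow> 'a) \<Rightarrow> 'a set \<Rightarrow> bool" where
  "stable \<sigma> \<delta> X \<longleftrightarrow> \<sigma> ` X \<subseteq> X \<and> \<delta> ` X \<subseteq> X"

text \<open>A word in sigma, delta is a list of booleans (True = sigma, False = delta);
  its evaluation is the composition of the letters, left to right.\<close>
definition word_map :: "('a \<Rightarrow> 'a) \<Rightarrow> ('a \<Rightarrow> 'a) \<Rightarrow> bool list \<Rightarrow> 'a \<Rightarrow> 'a" where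
  "word_map \<sigma> \<delta> w = foldr (\<lambda>b g. (if b then \<sigma> else \<delta>) \<circ> g) w id"

definition f_word :: "('a::ring_1 \<Rightarrow> 'a) \<Rightarrow> ('a \<Rightarrow> 'a) \<Rightarrow> nat \<Rightarrow> nat \<Rightarrow> 'a \<Rightarrow> 'a" where
  "f_word \<sigma> \<delta> i j r = (\<Sum>w\<in>{w. length w = j \<and> length (filter id w) = i}. word_map \<sigma> \<delta> w r)"

end

theory Submission
  imports Defs
begin

text \<open>Since \<open>e\<close> is left semicentral, \<open>Re \<subseteq> eR\<close> and \<open>eR\<close> is a two-sided ideal containing \<open>ab\<close>.
  Stability of \<open>Re\<close> gives \<open>\<sigma> e, \<delta> e \<in> eR\<close>, and the twisted Leibniz rule then makes \<open>eR\<close>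
  itself \<open>(\<sigma>,\<delta>)\<close>-stable. Hence every word in \<open>\<sigma>,\<delta>\<close> maps \<open>ab\<close> into \<open>eR = r\<^sub>R(cR)\<close>,
  which \<open>c\<close> annihilates.\<close>

lemma left_semicentral_left_mult_in_right_ideal:
  fixes e :: "'a::ring_1"
  assumes "e \<in> \<S>\<^sub>\<ell>" and "x \<in> {e * r | r. True}"
  shows "a * x \<in> {e * r | r. True}"
proof -
  obtain r where "x = e * r" using assms(2) by blast
  moreover have "e * a * e = a * e" using assms(1) by (simp add: left_semicentral_def)
  ultimately have "a * x = e * (a * e * r)" by (metis mult.assoc)
  then show ?thesis by blast
qed

lemma left_semicentral_left_ideal_subset:
  fixes e :: "'a::ring_1"
  assumes "e \<in> \<S>\<^sub>\<ell>" and "x \<in> {r * e | r. True}"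
  shows "x \<in> {e * r | r. True}"
proof -
  obtain r where "x = r * e" using assms(2) by blast
  moreover have "r * e = e * (r * e)"
    using assms(1) by (simp add: left_semicentral_def mult.assoc)
  ultimately show ?thesis by blast
qed

lemma right_ideal_mult_closed:
  fixes e :: "'a::semigroup_mult"
  shows "x \<in> {e * r | r. True} \<Longrightarrow> x * y \<in> {e * r | r. True}"
  by (auto simp: mult.assoc)

lemma right_ideal_add_closed:
  fixes e :: "'a::semiring"
  shows "x \<in> {e * r | r. True} \<Longrightarrow> y \<in> {e * r | r. True} \<Longrightarrow> x + y \<in> {e * r | r. True}"
  by (auto simp flip: distrib_left)

lemma stable_right_ideal_if_stable_left_ideal:
  fixes \<sigma> \<delta> :: "'a::ring_1 \<Rightarrow> 'a" and e :: 'a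
  assumes "ring_endo \<sigma>" and "sigma_derivation \<sigma> \<delta>" and "e \<in> \<S>\<^sub>\<ell>"
    and "stable \<sigma> \<delta> {r * e | r. True}"
  shows "stable \<sigma> \<delta> {e * r | r. True}"
proof -
  let ?eR = "{e * r | r. True}"
  have "e \<in> {r * e | r. True}" by (rule CollectI, rule exI[of _ 1], simp)
  then have "\<sigma> e \<in> {r * e | r. True}" and "\<delta> e \<in> {r * e | r. True}"
    using assms(4) unfolding stable_def by blast+
  then have \<sigma>e: "\<sigma> e \<in> ?eR" and \<delta>e: "\<delta> e \<in> ?eR"
    using left_semicentral_left_ideal_subset[OF assms(3)] by blast+
  have e_idem: "e * e = e" using assms(3) by (simp add: left_semicentral_def)
  have "\<sigma> x \<in> ?eR" and "\<delta> x \<in> ?eR" if "x \<in> ?eR" for x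
  proof -
    obtain r where "x = e * r" using \<open>x \<in> ?eR\<close> by blast
    then have "x = e * (e * r)" using e_idem by (simp flip: mult.assoc)
    then have \<sigma>x: "\<sigma> x = \<sigma> e * \<sigma> (e * r)"
      and \<delta>x: "\<delta> x = \<sigma> e * \<delta> (e * r) + \<delta> e * (e * r)"
      using assms(1,2) by (simp_all add: ring_endo_def sigma_derivation_def)
    show "\<sigma> x \<in> ?eR"
      unfolding \<sigma>x by (rule right_ideal_mult_closed[OF \<sigma>e])
    show "\<delta> x \<in> ?eR"
      unfolding \<delta>x by (intro right_ideal_add_closed right_ideal_mult_closed \<sigma>e \<delta>e)
  qed
  then show ?thesis by (auto simp: stable_def)
qed

lemma word_map_stable:
  assumes "stable \<sigma> \<delta> X" and "x \<in> X"
  shows "word_map \<sigma> \<delta> w x \<in> X"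
  using assms by (induction w) (auto simp: word_map_def stable_def)

lemma mult_f_word_eq_0_if_words_annihilated:
  fixes c :: "'a::ring_1"
  assumes "\<And>w. c * word_map \<sigma> \<delta> w x = 0"
  shows "c * f_word \<sigma> \<delta> k j x = 0"
  unfolding f_word_def sum_distrib_left by (rule sum.neutral) (use assms in blast)

theorem lemma2p1:
  fixes \<sigma> \<delta> :: "'a::ring_1 \<Rightarrow> 'a" and a b c e :: 'a
  assumes "ring_endo \<sigma>"
    and "sigma_derivation \<sigma> \<delta>"
    and "e \<in> \<S>\<^sub>\<ell>"
    and "r\<^sub>R {c * r | r. True} = {e * r | r. True}"
    and "b \<in> r\<^sub>R {c * r | r. True}"
    and "stable \<sigma> \<delta> {r * e | r. True}"
  shows "(c * \<sigma> (a * b) = 0 \<and> c * \<delta> (a * b) = 0) \<and>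
         (\<forall>j k. k \<le> j \<longrightarrow> c * f_word \<sigma> \<delta> k j (a * b) = 0)"
proof -
  let ?eR = "{e * r | r. True}"
  have annihilated: "c * z = 0" if "z \<in> ?eR" for z
  proof -
    have "z \<in> r\<^sub>R {c * r | r. True}" using that unfolding assms(4) .
    then have "c * 1 * z = 0" unfolding right_annihilator_def by blast
    then show ?thesis by simp
  qed
  have "b \<in> ?eR" using assms(5) unfolding assms(4) .
  then have ab: "a * b \<in> ?eR"
    by (rule left_semicentral_left_mult_in_right_ideal[OF assms(3)])
  have stable: "stable \<sigma> \<delta> ?eR"
    by (rule stable_right_ideal_if_stable_left_ideal[OF assms(1,2,3,6)])
  then have "\<sigma> (a * b) \<in> ?eR" and "\<delta> (a * b) \<in> ?eR"
    using ab unfolding stable_def by blast+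
  then have "c * \<sigma> (a * b) = 0" and "c * \<delta> (a * b) = 0"
    using annihilated by blast+
  moreover have "c * f_word \<sigma> \<delta> k j (a * b) = 0" for k j
    by (rule mult_f_word_eq_0_if_words_annihilated, rule annihilated)
      (rule word_map_stable[OF stable ab])
  ultimately show ?thesis by blast
qed

end
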